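(* Let $\beta>0$ and let $Y_i:\mathbb{R}^+\to\mathbb{R}^{m\times(mn+2)}$, $i=1,\dots,n$, be the agents' regressors, and let $Y_{F_i}$ be the solution of $\dot Y_{F_i}=-\beta Y_{F_i}+Y_i$, $Y_{F_i}(0)=0$. If the set $\{Y_1,\dots,Y_n\}$ is collectively initially exciting, then the set $\{Y_{F_1},\dots,Y_{F_n}\}$ is collectively initially exciting.
   Context: The regressors are $Y_i(t)=\big[\ddot q_i,\; k(t)\dot q_i,\; \tfrac12 k(t)[Q_{i1}(t)I_m,\dots,Q_{in}(t)I_m]\big]$, where $q_i(t)\in\mathbb{R}^m$ are agent positions, $k(t)>0$ is a bounded gain, and $Q_{ij}(t)$ are entries of the signless Laplacian $\mathcal D(t)+\mathcal A(t)$ of the time-varying interaction graph. A set of bounded, locally integrable signals $\phi_i:\mathbb{R}^+\to\mathbb{R}^{u\times v}$, $i=1,\dots,n$, is collectively initially exciting (C-IE) if there exist constants $\bar T>0$, $\gamma>0$ such that $\int_{t_0}^{t_0+\bar T}\sum_{i=1}^n\phi_i^\top(\tau)\phi_i(\tau)\,d\tau\ge\gamma I_v$ for some $t_0\ge0$. *)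

theory Defs
  imports "HOL-Analysis.Analysis"
begin

text \<open>Signals on R+ are functions real => matrix, only their values on t >= 0 matter.
  A u x v real matrix is an element of real^'v^'u (rows indexed by 'u, columns by 'v).\<close>

definition bounded_signal :: "(real \<Rightarrow> real^'v^'u) \<Rightarrow> bool" where
  "bounded_signal \<phi> \<longleftrightarrow> bounded (\<phi> ` {0..})"

definition locally_integrable_signal :: "(real \<Rightarrow> real^'v^'u) \<Rightarrow> bool" where
  "locally_integrable_signal \<phi> \<longleftrightarrow> (\<forall>a b. 0 \<le> a \<longrightarrow> \<phi> integrable_on {a..b})"

definition mat_ge_scaled_id :: "real^'v^'v \<Rightarrow> real \<Rightarrow> bool" where
  "mat_ge_scaled_id M \<gamma> \<longleftrightarrow> (\<forall>x::real^'v. \<gamma> * (x \<bullet> x) \<le> x \<bullet> (M *v x))"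

definition C_IE :: "nat \<Rightarrow> (nat \<Rightarrow> real \<Rightarrow> real^'v^'u) \<Rightarrow> bool" where
  "C_IE n \<phi> \<longleftrightarrow>
     (\<forall>i\<in>{1..n}. bounded_signal (\<phi> i) \<and> locally_integrable_signal (\<phi> i)) \<and>
     (\<exists>T>0. \<exists>\<gamma>>0. \<exists>t0\<ge>0.
        mat_ge_scaled_id
          (integral {t0..t0+T} (\<lambda>\<tau>. \<Sum>i\<in>{1..n}. transpose (\<phi> i \<tau>) ** \<phi> i \<tau>)) \<gamma>)"

end

theory Submission
  imports Defs
begin

(*
  The filter dY_F/dt = -beta Y_F + Y is stable: let B bound Y. After the last time at which a
  component of Y_F is at most B/beta, the right-hand side of its equation is negative, so the
  component never exceeds B/beta; applied to the negated component as well, this bounds Y_F.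
  As an indefinite integral, Y_F is also continuous.

  For the excitation, integrate the Gram matrices of the Y_F over the window [0, t0 + T]. If x were
  in the kernel of that integral, continuity would force Y_F i x = 0 on the whole window. The
  filter equation then makes every indefinite integral of Y_i x vanish there, so by Lebesgue's
  differentiation theorem Y_i x = 0 almost everywhere. Then x would also be in the kernel of the
  Gram integral of the Y_i over [t0, t0 + T], contradicting the excitation of the Y_i. So the
  integral is positive definite, and its minimum on the unit sphere is the new gamma.
*)

lemma continuous_on_if_indefinite_integral:
  fixes f :: "real \<Rightarrow> 'a::banach"
  assumes "f integrable_on {a..b}" and "\<And>t. t \<in> {a..b} \<Longrightarrow> z t = integral {a..t} f"
  shows "continuous_on {a..b} z"
  using indefinite_integral_continuous_1[OF assms(1)] by (rule continuous_on_eq) (use assms(2) in auto)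

lemma locally_integrable_signal_indefinite_integral:
  fixes z g :: "real \<Rightarrow> real^'v^'u"
  assumes "\<And>t. 0 \<le> t \<Longrightarrow> g integrable_on {0..t}"
    and "\<And>t. 0 \<le> t \<Longrightarrow> z t = integral {0..t} g"
  shows "locally_integrable_signal z"
  unfolding locally_integrable_signal_def
proof (intro allI impI)
  fix a b :: real
  assume "0 \<le> a"
  show "z integrable_on {a..b}"
  proof (cases "a \<le> b")
    case True
    have "continuous_on {0..b} z"
      using assms \<open>0 \<le> a\<close> True by (intro continuous_on_if_indefinite_integral) auto
    then have "continuous_on {a..b} z"
      by (rule continuous_on_subset) (use \<open>0 \<le> a\<close> in auto)
    then show ?thesis
      by (rule integrable_continuous_interval)
  qed (simp add: integrable_on_empty)
qed

lemma filter_output_le: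
  fixes z y :: "real \<Rightarrow> real"
  assumes "\<beta> > 0"
    and y_bound: "\<And>s. 0 \<le> s \<Longrightarrow> \<bar>y s\<bar> \<le> B"
    and integrable: "\<And>t. 0 \<le> t \<Longrightarrow> (\<lambda>s. - \<beta> * z s + y s) integrable_on {0..t}"
    and z: "\<And>t. 0 \<le> t \<Longrightarrow> z t = integral {0..t} (\<lambda>s. - \<beta> * z s + y s)"
    and "0 \<le> t"
  shows "z t \<le> B / \<beta>"
proof -
  define g where "g = (\<lambda>s. - \<beta> * z s + y s)"
  define S where "S = {s \<in> {0..t}. z s \<le> B / \<beta>}"
  define s0 where "s0 = Sup S"
  have "continuous_on {0..t} z"
    using integrable[OF \<open>0 \<le> t\<close>] z by (intro continuous_on_if_indefinite_integral) auto
  then have "closed S"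
    unfolding S_def by (intro continuous_on_closed_Collect_le continuous_on_const) auto
  moreover have "0 \<in> S"
    using z[of 0] \<open>0 \<le> t\<close> y_bound[of 0] \<open>\<beta> > 0\<close> by (auto simp: S_def)
  moreover have bdd: "bdd_above S"
    unfolding S_def by (rule bdd_aboveI[of _ t]) auto
  ultimately have "s0 \<in> S"
    unfolding s0_def using closed_contains_Sup by blast
  then have s0: "0 \<le> s0" "s0 \<le> t" "z s0 \<le> B / \<beta>"
    by (auto simp: S_def)
  \<comment> \<open>After the last time \<open>s0\<close> at which \<open>z \<le> B / \<beta>\<close>, the right-hand side is negative.\<close>
  have g_nonpos: "g s \<le> 0" if "s \<in> {s0..t} - {s0}" for s
  proof -
    have "s \<notin> S"
      using that cSup_upper[OF _ bdd, of s] by (auto simp: s0_def)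
    then have "B < \<beta> * z s"
      using that s0 \<open>\<beta> > 0\<close> by (auto simp: S_def field_simps)
    then show ?thesis
      using y_bound[of s] that s0 by (auto simp: g_def)
  qed
  have g_integrable: "g integrable_on {s0..t}"
    using s0 by (intro integrable_on_subinterval[OF integrable[OF \<open>0 \<le> t\<close>, folded g_def]]) auto
  have "integral {s0..t} g = integral {s0..t} (\<lambda>s. if s = s0 then 0 else g s)"
    by (rule integral_spike[of "{s0}"]) auto
  also have "\<dots> \<le> integral {s0..t} (\<lambda>_. 0)"
    using g_nonpos integrable_spike[OF g_integrable, of "{s0}" "\<lambda>s. if s = s0 then 0 else g s"]
    by (intro integral_le) auto
  finally have "integral {s0..t} g \<le> 0"
    by simp
  moreover have "z t = z s0 + integral {s0..t} g"
    using z[OF \<open>0 \<le> t\<close>] z[OF s0(1)] integrable[OF \<open>0 \<le> t\<close>] s0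
    by (simp add: g_def Henstock_Kurzweil_Integration.integral_combine)
  ultimately show ?thesis
    using s0 by simp
qed

lemma filter_output_norm_le:
  fixes z y :: "real \<Rightarrow> 'a::euclidean_space"
  assumes "\<beta> > 0"
    and y_bound: "\<And>s. 0 \<le> s \<Longrightarrow> norm (y s) \<le> B"
    and integrable: "\<And>t. 0 \<le> t \<Longrightarrow> (\<lambda>s. - \<beta> *\<^sub>R z s + y s) integrable_on {0..t}"
    and z: "\<And>t. 0 \<le> t \<Longrightarrow> z t = integral {0..t} (\<lambda>s. - \<beta> *\<^sub>R z s + y s)"
    and "0 \<le> t"
  shows "norm (z t) \<le> DIM('a) * (B / \<beta>)"
proof -
  have component_le: "c * (z t \<bullet> b) \<le> B / \<beta>" if "b \<in> Basis" "\<bar>c\<bar> = 1" for b c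
  proof -
    have L: "bounded_linear (\<lambda>v. c * (v \<bullet> b))"
      by (intro bounded_linear_const_mult bounded_linear_inner_left)
    have L_rhs: "(\<lambda>v. c * (v \<bullet> b)) \<circ> (\<lambda>s. - \<beta> *\<^sub>R z s + y s) =
        (\<lambda>s. - \<beta> * (c * (z s \<bullet> b)) + c * (y s \<bullet> b))"
      by (auto simp: algebra_simps)
    show ?thesis
    proof (rule filter_output_le[OF \<open>\<beta> > 0\<close>, where z = "\<lambda>s. c * (z s \<bullet> b)" and y = "\<lambda>s. c * (y s \<bullet> b)"])
      show "\<bar>c * (y s \<bullet> b)\<bar> \<le> B" if "0 \<le> s" for s
        using Basis_le_norm[OF \<open>b \<in> Basis\<close>, of "y s"] y_bound[OF that] \<open>\<bar>c\<bar> = 1\<close>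
        by (simp add: abs_mult)
      show "(\<lambda>s. - \<beta> * (c * (z s \<bullet> b)) + c * (y s \<bullet> b)) integrable_on {0..t}" if "0 \<le> t" for t
        using integrable_linear[OF integrable[OF that] L] by (simp only: L_rhs)
      show "c * (z t \<bullet> b) = integral {0..t} (\<lambda>s. - \<beta> * (c * (z s \<bullet> b)) + c * (y s \<bullet> b))"
        if "0 \<le> t" for t
        using integral_linear[OF integrable[OF that] L] z[OF that] by (simp only: L_rhs)
    qed fact
  qed
  have "norm (z t) \<le> (\<Sum>b\<in>Basis. \<bar>z t \<bullet> b\<bar>)"
    by (rule norm_le_l1)
  also have "\<dots> \<le> DIM('a) * (B / \<beta>)"
  proof (rule sum_bounded_above)
    show "\<bar>z t \<bullet> b\<bar> \<le> B / \<beta>" if "b \<in> Basis" for b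
      using component_le[OF that, of 1] component_le[OF that, of "-1"] by simp
  qed
  finally show ?thesis .
qed

lemma bounded_signal_filter_output:
  fixes z y :: "real \<Rightarrow> real^'v^'u"
  assumes "\<beta> > 0"
    and "bounded_signal y"
    and "\<And>t. 0 \<le> t \<Longrightarrow> (\<lambda>s. - \<beta> *\<^sub>R z s + y s) integrable_on {0..t}"
    and "\<And>t. 0 \<le> t \<Longrightarrow> z t = integral {0..t} (\<lambda>s. - \<beta> *\<^sub>R z s + y s)"
  shows "bounded_signal z"
proof -
  obtain B where "\<And>s. 0 \<le> s \<Longrightarrow> norm (y s) \<le> B"
    using \<open>bounded_signal y\<close> unfolding bounded_signal_def bounded_iff by auto
  then have "norm (z t) \<le> DIM(real^'v^'u) * (B / \<beta>)" if "0 \<le> t" for t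
    using filter_output_norm_le[OF \<open>\<beta> > 0\<close>] assms(3,4) that by blast
  then show ?thesis
    unfolding bounded_signal_def bounded_iff by auto
qed

lemma negligible_nonzero_if_indefinite_integral_eq_0:
  fixes f :: "real \<Rightarrow> 'a::euclidean_space"
  assumes f: "f integrable_on {a..b}"
    and zero: "\<And>t. t \<in> {a..b} \<Longrightarrow> integral {a..t} f = 0"
  shows "negligible {x \<in> {a..b}. f x \<noteq> 0}"
proof -
  define g where "g = (\<lambda>x. if x \<in> {a..b} then f x else 0)"
  have "g integrable_on UNIV"
    unfolding g_def using f by (simp only: Henstock_Kurzweil_Integration.integrable_restrict_UNIV)
  then have "g integrable_on cbox c d" for c d
    by (rule integrable_on_subcbox) simp
  \<comment> \<open>Lebesgue's differentiation theorem for the indefinite integral of \<open>g\<close>\<close>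
  then obtain N where N: "negligible N"
    and deriv: "\<And>x e. x \<notin> N \<Longrightarrow> 0 < e \<Longrightarrow> \<exists>d>0. \<forall>h. 0 < h \<and> h < d \<longrightarrow>
                  norm (integral (cbox x (x + h *\<^sub>R One)) g /\<^sub>R h ^ DIM(real) - g x) < e"
    by (rule integrable_ccontinuous_explicit) blast
  have vanish: "f x = 0" if x: "x \<in> {a..<b}" "x \<notin> N" for x
  proof (rule ccontr)
    assume "f x \<noteq> 0"
    then obtain d where "d > 0" and d: "\<And>h. 0 < h \<Longrightarrow> h < d \<Longrightarrow>
        norm (integral {x..x + h} g /\<^sub>R h - g x) < norm (f x)"
      using deriv[OF x(2), of "norm (f x)"] by auto
    define h where "h = min (d / 2) (b - x)"
    have h: "0 < h" "h < d" "x + h \<le> b"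
      using \<open>d > 0\<close> x by (auto simp: h_def)
    have "integral {a..x} f + integral {x..x + h} f = integral {a..x + h} f"
      using x h by (intro Henstock_Kurzweil_Integration.integral_combine integrable_on_subinterval[OF f]) auto
    then have "integral {x..x + h} f = 0"
      using zero x h by simp
    moreover have "integral {x..x + h} g = integral {x..x + h} f"
      using x h by (intro integral_cong) (auto simp: g_def)
    ultimately have "integral {x..x + h} g = 0"
      by simp
    moreover have "g x = f x"
      using x by (simp add: g_def)
    ultimately show False
      using d[OF h(1,2)] by simp
  qed
  have "{x \<in> {a..b}. f x \<noteq> 0} \<subseteq> N \<union> {b}"
  proof
    fix x
    assume x: "x \<in> {x \<in> {a..b}. f x \<noteq> 0}"
    show "x \<in> N \<union> {b}"
    proof (rule ccontr)
      assume "x \<notin> N \<union> {b}"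
      with x vanish[of x] show False
        by auto
    qed
  qed
  moreover have "negligible (N \<union> {b})"
    using N by simp
  ultimately show ?thesis
    by (rule negligible_subset[rotated])
qed

lemma negligible_filter_input_if_output_vanishes:
  fixes w y :: "real \<Rightarrow> 'a::euclidean_space"
  assumes integrable: "(\<lambda>s. - \<beta> *\<^sub>R w s + y s) integrable_on {0..S}"
    and w: "\<And>t. t \<in> {0..S} \<Longrightarrow> w t = integral {0..t} (\<lambda>s. - \<beta> *\<^sub>R w s + y s)"
    and vanish: "\<And>t. t \<in> {0..S} \<Longrightarrow> w t = 0"
  shows "negligible {s \<in> {0..S}. y s \<noteq> 0}"
proof -
  have "negligible {s \<in> {0..S}. - \<beta> *\<^sub>R w s + y s \<noteq> 0}"
    using integrable by (rule negligible_nonzero_if_indefinite_integral_eq_0) (use w vanish in auto)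
  moreover have "{s \<in> {0..S}. - \<beta> *\<^sub>R w s + y s \<noteq> 0} = {s \<in> {0..S}. y s \<noteq> 0}"
    using vanish by auto
  ultimately show ?thesis
    by simp
qed

definition gram :: "('i \<Rightarrow> real \<Rightarrow> real^'v^'u) \<Rightarrow> 'i set \<Rightarrow> real \<Rightarrow> real^'v^'v" where
  "gram \<phi> I \<tau> = (\<Sum>i\<in>I. transpose (\<phi> i \<tau>) ** \<phi> i \<tau>)"

lemma bounded_linear_matrix_vector_mult_left: "bounded_linear (\<lambda>A::real^'n^'m. A *v x)"
proof -
  have "linear (\<lambda>A::real^'n^'m. A *v x)"
    by (rule linearI) (simp_all add: matrix_vector_mult_add_rdistrib scaleR_matrix_vector_assoc)
  then show ?thesis
    by (simp add: linear_conv_bounded_linear)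
qed

lemma bounded_linear_quadratic_form: "bounded_linear (\<lambda>A::real^'n^'n. x \<bullet> (A *v x))"
  using bounded_linear_compose[OF bounded_linear_inner_right bounded_linear_matrix_vector_mult_left] .

lemma quadratic_form_transpose_mult_self:
  fixes A :: "real^'n^'m"
  shows "x \<bullet> ((transpose A ** A) *v x) = (A *v x) \<bullet> (A *v x)"
proof -
  have "(transpose A ** A) *v x = (A *v x) v* A"
    by (simp add: matrix_vector_mul_assoc[symmetric])
  then show ?thesis
    by (metis dot_lmul_matrix inner_commute)
qed

lemma quadratic_form_gram:
  "x \<bullet> (gram \<phi> I \<tau> *v x) = (\<Sum>i\<in>I. (\<phi> i \<tau> *v x) \<bullet> (\<phi> i \<tau> *v x))"
proof -
  have "x \<bullet> (gram \<phi> I \<tau> *v x) = (\<Sum>i\<in>I. x \<bullet> ((transpose (\<phi> i \<tau>) ** \<phi> i \<tau>) *v x))"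
    unfolding gram_def
    using linear_sum[OF bounded_linear.linear[OF bounded_linear_quadratic_form[of x]],
        of "\<lambda>i. transpose (\<phi> i \<tau>) ** \<phi> i \<tau>" I]
    by simp
  then show ?thesis
    by (simp add: quadratic_form_transpose_mult_self)
qed

lemma quadratic_form_integral:
  fixes M :: "real \<Rightarrow> real^'n^'n"
  assumes "M integrable_on S"
  shows "x \<bullet> (integral S M *v x) = integral S (\<lambda>t. x \<bullet> (M t *v x))"
  using integral_linear[OF assms bounded_linear_quadratic_form] by (simp add: o_def)

lemma continuous_on_gram:
  assumes "\<And>i. i \<in> I \<Longrightarrow> continuous_on S (\<phi> i)"
  shows "continuous_on S (gram \<phi> I)"
  unfolding gram_def matrix_matrix_mult_def transpose_def
  by (intro continuous_intros assms)

lemma gram_integral_kernel: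
  fixes \<phi> :: "'i \<Rightarrow> real \<Rightarrow> real^'v^'u"
  assumes "finite I" "a < b"
    and cont: "\<And>i. i \<in> I \<Longrightarrow> continuous_on {a..b} (\<phi> i)"
    and nonpos: "x \<bullet> (integral {a..b} (gram \<phi> I) *v x) \<le> 0"
    and "i \<in> I" "\<tau> \<in> {a..b}"
  shows "\<phi> i \<tau> *v x = 0"
proof -
  define f where "f \<tau> = x \<bullet> (gram \<phi> I \<tau> *v x)" for \<tau>
  have gram_cont: "continuous_on {a..b} (gram \<phi> I)"
    using cont by (rule continuous_on_gram)
  then have f_cont: "continuous_on {a..b} f"
    unfolding f_def
    by (rule linear_continuous_on_compose[OF _ bounded_linear.linear[OF bounded_linear_quadratic_form]])
  have f_nonneg: "0 \<le> f \<tau>" for \<tau>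
    unfolding f_def quadratic_form_gram by (intro sum_nonneg) simp
  have "integral {a..b} f = x \<bullet> (integral {a..b} (gram \<phi> I) *v x)"
    unfolding f_def using gram_cont
    by (intro quadratic_form_integral[symmetric] integrable_continuous_interval)
  moreover have "0 \<le> integral {a..b} f"
    using f_cont f_nonneg by (intro integral_nonneg integrable_continuous_interval)
  ultimately have "(f has_integral 0) (cbox a b)"
    using nonpos f_cont integrable_continuous_interval[OF f_cont]
    by (metis antisym cbox_interval has_integral_integral)
  then have "f \<tau> = 0"
    using has_integral_0_cbox_imp_0[of a b f \<tau>] f_cont f_nonneg \<open>a < b\<close> \<open>\<tau> \<in> {a..b}\<close> by simp
  then have "(\<phi> i \<tau> *v x) \<bullet> (\<phi> i \<tau> *v x) = 0"
    using \<open>finite I\<close> \<open>i \<in> I\<close> unfolding f_def quadratic_form_gram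
    by (subst (asm) sum_nonneg_eq_0_iff) auto
  then show ?thesis
    by simp
qed

lemma quadratic_form_gram_integral_eq_0:
  assumes "negligible {s \<in> S. \<exists>i\<in>I. \<phi> i s *v x \<noteq> 0}"
  shows "x \<bullet> (integral S (gram \<phi> I) *v x) = 0"
proof (cases "gram \<phi> I integrable_on S")
  case True
  have "x \<bullet> (integral S (gram \<phi> I) *v x) = integral S (\<lambda>s. x \<bullet> (gram \<phi> I s *v x))"
    using True by (rule quadratic_form_integral)
  also have "\<dots> = integral S (\<lambda>_. 0)"
    using assms by (rule integral_spike) (auto simp: quadratic_form_gram)
  finally show ?thesis
    by simp
qed (simp add: not_integrable_integral)

lemma mat_ge_scaled_id_if_pos_definite:
  fixes M :: "real^'n^'n"
  assumes pos: "\<And>x. x \<noteq> 0 \<Longrightarrow> 0 < x \<bullet> (M *v x)"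
  obtains \<gamma> where "\<gamma> > 0" "mat_ge_scaled_id M \<gamma>"
proof -
  have "axis undefined 1 \<in> sphere (0::real^'n) 1"
    by simp
  moreover have "continuous_on (sphere 0 1) (\<lambda>x. x \<bullet> (M *v x))"
    by (intro continuous_intros linear_continuous_on[OF matrix_vector_mul_bounded_linear])
  ultimately obtain x0 where x0: "x0 \<in> sphere 0 1"
    and min: "\<And>u. u \<in> sphere 0 1 \<Longrightarrow> x0 \<bullet> (M *v x0) \<le> u \<bullet> (M *v u)"
    using continuous_attains_inf[OF compact_sphere] by blast
  have "mat_ge_scaled_id M (x0 \<bullet> (M *v x0))"
    unfolding mat_ge_scaled_id_def
  proof
    fix x :: "real^'n"
    show "x0 \<bullet> (M *v x0) * (x \<bullet> x) \<le> x \<bullet> (M *v x)"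
    proof (cases "x = 0")
      case False
      define u where "u = x /\<^sub>R norm x"
      have "u \<in> sphere 0 1"
        using False by (simp add: u_def)
      have "norm x *\<^sub>R u = x"
        using False by (simp add: u_def)
      have "(norm x *\<^sub>R u) \<bullet> (M *v (norm x *\<^sub>R u)) = (u \<bullet> (M *v u)) * (norm x)\<^sup>2"
        by (simp add: matrix_vector_mult_scaleR power2_eq_square)
      then have "x \<bullet> (M *v x) = (u \<bullet> (M *v u)) * (x \<bullet> x)"
        by (simp only: \<open>norm x *\<^sub>R u = x\<close> power2_norm_eq_inner)
      then show ?thesis
        using min[OF \<open>u \<in> sphere 0 1\<close>] by (simp add: mult_right_mono)
    qed simp
  qed
  moreover have "x0 \<bullet> (M *v x0) > 0"
    using x0 by (intro pos) auto
  ultimately show ?thesis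
    using that by blast
qed

lemma gram_integral_filter_output_pos:
  fixes Y YF :: "'i \<Rightarrow> real \<Rightarrow> real^'v^'u"
  assumes "finite I" "0 < S"
    and integrable: "\<And>i. i \<in> I \<Longrightarrow> (\<lambda>s. - \<beta> *\<^sub>R YF i s + Y i s) integrable_on {0..S}"
    and filter: "\<And>i t. i \<in> I \<Longrightarrow> t \<in> {0..S} \<Longrightarrow>
                   YF i t = integral {0..t} (\<lambda>s. - \<beta> *\<^sub>R YF i s + Y i s)"
    and "T \<subseteq> {0..S}"
    and excited: "0 < x \<bullet> (integral T (gram Y I) *v x)"
  shows "0 < x \<bullet> (integral {0..S} (gram YF I) *v x)"
proof (rule ccontr)
  assume "\<not> ?thesis"
  then have nonpos: "x \<bullet> (integral {0..S} (gram YF I) *v x) \<le> 0"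
    by simp
  have output_vanishes: "YF i t *v x = 0" if "i \<in> I" "t \<in> {0..S}" for i t
    using that filter integrable
    by (intro gram_integral_kernel[OF \<open>finite I\<close> \<open>0 < S\<close> continuous_on_if_indefinite_integral nonpos])
      auto
  have input_vanishes: "negligible {s \<in> {0..S}. Y i s *v x \<noteq> 0}" if "i \<in> I" for i
  proof (rule negligible_filter_input_if_output_vanishes)
    have L: "bounded_linear (\<lambda>A::real^'v^'u. A *v x)"
      by (rule bounded_linear_matrix_vector_mult_left)
    have rhs: "(\<lambda>A. A *v x) \<circ> (\<lambda>s. - \<beta> *\<^sub>R YF i s + Y i s) =
        (\<lambda>s. - \<beta> *\<^sub>R (YF i s *v x) + Y i s *v x)"
      by (simp only: o_def matrix_vector_mult_add_rdistrib scaleR_matrix_vector_assoc)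
    show "(\<lambda>s. - \<beta> *\<^sub>R (YF i s *v x) + Y i s *v x) integrable_on {0..S}"
      using integrable_linear[OF integrable[OF \<open>i \<in> I\<close>] L] by (simp only: rhs)
    show "YF i t *v x = integral {0..t} (\<lambda>s. - \<beta> *\<^sub>R (YF i s *v x) + Y i s *v x)"
      if "t \<in> {0..S}" for t
    proof -
      have "(\<lambda>s. - \<beta> *\<^sub>R YF i s + Y i s) integrable_on {0..t}"
        using that by (intro integrable_on_subinterval[OF integrable[OF \<open>i \<in> I\<close>]]) auto
      from integral_linear[OF this L] show ?thesis
        using filter[OF \<open>i \<in> I\<close> that] by (simp only: rhs)
    qed
    show "YF i t *v x = 0" if "t \<in> {0..S}" for t
      using output_vanishes \<open>i \<in> I\<close> that .
  qed
  have "{s \<in> T. \<exists>i\<in>I. Y i s *v x \<noteq> 0} \<subseteq> (\<Union>i\<in>I. {s \<in> {0..S}. Y i s *v x \<noteq> 0})"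
    using \<open>T \<subseteq> {0..S}\<close> by blast
  moreover have "negligible (\<Union>i\<in>I. {s \<in> {0..S}. Y i s *v x \<noteq> 0})"
    using \<open>finite I\<close> input_vanishes by (intro negligible_Union) auto
  ultimately have "negligible {s \<in> T. \<exists>i\<in>I. Y i s *v x \<noteq> 0}"
    by (rule negligible_subset[rotated])
  then have "x \<bullet> (integral T (gram Y I) *v x) = 0"
    by (rule quadratic_form_gram_integral_eq_0)
  with excited show False
    by simp
qed

theorem proposition6:
  fixes \<beta> :: real and m n :: nat
    and Y YF :: "nat \<Rightarrow> real \<Rightarrow> real^'v^'u"
  assumes "\<beta> > 0"
    and "CARD('u) = m" and "CARD('v) = m * n + 2"
    and "\<And>i t. i \<in> {1..n} \<Longrightarrow> 0 \<le> t \<Longrightarrow>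
           (\<lambda>s. - \<beta> *\<^sub>R YF i s + Y i s) integrable_on {0..t}"
    and "\<And>i t. i \<in> {1..n} \<Longrightarrow> 0 \<le> t \<Longrightarrow>
           YF i t = integral {0..t} (\<lambda>s. - \<beta> *\<^sub>R YF i s + Y i s)"
    and "C_IE n Y"
  shows "C_IE n YF"
proof -
  have Y_bounded: "bounded_signal (Y i)" if "i \<in> {1..n}" for i
    using \<open>C_IE n Y\<close> that unfolding C_IE_def by blast
  obtain T \<gamma> t0 where "T > 0" "\<gamma> > 0" "t0 \<ge> 0"
    and excited: "mat_ge_scaled_id (integral {t0..t0 + T} (gram Y {1..n})) \<gamma>"
    using \<open>C_IE n Y\<close> unfolding C_IE_def gram_def by blast
  have YF_bounded: "bounded_signal (YF i)" if "i \<in> {1..n}" for i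
    using \<open>\<beta> > 0\<close> Y_bounded[OF that] assms(4,5)[OF that] by (rule bounded_signal_filter_output)
  have YF_integrable: "locally_integrable_signal (YF i)" if "i \<in> {1..n}" for i
    using assms(4,5)[OF that] by (rule locally_integrable_signal_indefinite_integral)
  have "0 < x \<bullet> (integral {0..t0 + T} (gram YF {1..n}) *v x)" if "x \<noteq> 0" for x
  proof (rule gram_integral_filter_output_pos[where T = "{t0..t0 + T}" and Y = Y])
    have "0 < \<gamma> * (x \<bullet> x)"
      using \<open>\<gamma> > 0\<close> \<open>x \<noteq> 0\<close> by simp
    also have "\<dots> \<le> x \<bullet> (integral {t0..t0 + T} (gram Y {1..n}) *v x)"
      using excited unfolding mat_ge_scaled_id_def by blast
    finally show "0 < x \<bullet> (integral {t0..t0 + T} (gram Y {1..n}) *v x)" .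
  qed (use \<open>T > 0\<close> \<open>t0 \<ge> 0\<close> assms(4,5) in auto)
  then obtain \<gamma>' where "\<gamma>' > 0" and "mat_ge_scaled_id (integral {0..t0 + T} (gram YF {1..n})) \<gamma>'"
    by (rule mat_ge_scaled_id_if_pos_definite)
  then have "\<exists>T>0. \<exists>\<gamma>>0. \<exists>t0\<ge>0. mat_ge_scaled_id (integral {t0..t0 + T} (gram YF {1..n})) \<gamma>"
    using \<open>T > 0\<close> \<open>t0 \<ge> 0\<close> by (metis add.left_neutral add_nonneg_pos order_refl)
  then show ?thesis
    unfolding C_IE_def gram_def using YF_bounded YF_integrable by blast
qed

end
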